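(* Let $0=t_0<\dots<t_N=T$, $\tau_k=t_k-t_{k-1}$, $\tau=\max_k\tau_k$, $r_k=\tau_k/\tau_{k-1}$ ($2\le k\le N$). Let $r_{\max}\approx4.8645$ be the positive root of $x^3=(2x+1)^2$, fix $\delta\in(0,r_{\max})$, assume $r_2>0$ and $0<r_k\le r_{\max}-\delta$ for $3\le k\le N$, and set $c_r=r_{\max}^{5/2}$. Then the DCC kernels satisfy, for $1\le n\le N$, $$p^{(n)}_{n-j}\le c_r\delta^{-1}\sqrt{\tau_j}\sqrt\tau,\qquad 2\le j\le n,$$ $$p^{(n)}_{n-1}\le\tau_1+c_r\delta^{-1}\sqrt{\tau_2}\sqrt\tau.$$
   Context: BDF2 kernels: $b^{(1)}_0=1/\tau_1$; for $n\ge2$, $b^{(n)}_0=\frac{1+2r_n}{\tau_n(1+r_n)}$, $b^{(n)}_1=-\frac{r_n^2}{\tau_n(1+r_n)}$, $b^{(n)}_j=0$ for $2\le j\le n-1$. The discrete complementary convolution (DCC) kernels $p^{(n)}_{n-j}$ ($1\le j\le n$) are defined by $\sum_{j=k}^np^{(n)}_{n-j}b^{(j)}_{j-k}=1$ for all $1\le k\le n$. *)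

theory Defs
  imports Complex_Main
begin

definition tau :: "(nat \<Rightarrow> real) \<Rightarrow> nat \<Rightarrow> real" where
  "tau t k = t k - t (k - 1)"

definition tau_max :: "(nat \<Rightarrow> real) \<Rightarrow> nat \<Rightarrow> real" where
  "tau_max t N = Max (tau t ` {1..N})"

definition ratio :: "(nat \<Rightarrow> real) \<Rightarrow> nat \<Rightarrow> real" where
  "ratio t k = tau t k / tau t (k - 1)"

definition bdf2 :: "(nat \<Rightarrow> real) \<Rightarrow> nat \<Rightarrow> nat \<Rightarrow> real" where
  "bdf2 t n j =
     (if n = 1 then (if j = 0 then 1 / tau t 1 else 0)
      else if j = 0 then (1 + 2 * ratio t n) / (tau t n * (1 + ratio t n))
      else if j = 1 then - (ratio t n)\<^sup>2 / (tau t n * (1 + ratio t n))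
      else 0)"

text \<open>DCC kernels: p n i stands for p^(n)_i; they are characterised by the
  discrete complementary convolution identities.\<close>
definition is_dcc :: "(nat \<Rightarrow> real) \<Rightarrow> nat \<Rightarrow> (nat \<Rightarrow> nat \<Rightarrow> real) \<Rightarrow> bool" where
  "is_dcc t N p \<longleftrightarrow>
     (\<forall>n\<in>{1..N}. \<forall>k\<in>{1..n}. (\<Sum>j=k..n. p n (n - j) * bdf2 t j (j - k)) = 1)"

definition r_max :: real where
  "r_max = (THE x. x > 0 \<and> x ^ 3 = (2 * x + 1)\<^sup>2)"

definition c_r :: real where
  "c_r = r_max powr (5 / 2)"

end

theory Submission
  imports Defs
begin

text \<open>Since b^(j)_i = 0 for i \<ge> 2, the DCC identities collapse to the two-term backward
  recursion  w_k p^(n)_(n-k) = \<tau>_k + r_(k+1) / (1 + r_(k+1)) p^(n)_(n-k-1),  where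
  w_k = \<tau>_k b^(k)_0 equals (1 + 2 r_k) / (1 + r_k) for k \<ge> 2 and 1 for k = 1.
  Backward induction on k gives  w_k p^(n)_(n-k) \<le> B sqrt \<tau>_k sqrt \<tau>  with B = c_r / \<delta>:
  since \<tau>_(k+1) = r_(k+1) \<tau>_k, the step closes as soon as g(r_(k+1)) \<le> 1 - 1/B for
  g(r) = r^(3/2) / (1 + 2 r).  The function g increases to g(r_max) = 1, and with R = sqrt r_max
  the gap 1 - g(r) is at least (r_max - r) / R^5 = (r_max - r) / c_r \<ge> \<delta> / c_r.\<close>

lemma r_max_equation_solvable: "\<exists>x::real. x > 0 \<and> x ^ 3 = (2 * x + 1)\<^sup>2"
proof -
  have "\<exists>x\<ge>4. x \<le> 5 \<and> (\<lambda>x::real. x ^ 3 - (2 * x + 1)\<^sup>2) x = 0"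
    by (rule IVT) (auto intro!: continuous_intros simp: power2_eq_square)
  then show ?thesis by force
qed

lemma r_max_equation_unique:
  fixes x y :: real
  assumes "x > 0" "x ^ 3 = (2 * x + 1)\<^sup>2" "y > 0" "y ^ 3 = (2 * y + 1)\<^sup>2"
  shows "x = y"
proof -
  have fixpoint: "u = 4 + 4 / u + 1 / u\<^sup>2" if "u > 0" "u ^ 3 = (2 * u + 1)\<^sup>2" for u :: real
  proof -
    have "u = u ^ 3 / u\<^sup>2" using \<open>u > 0\<close> by (simp add: power2_eq_square power3_eq_cube)
    also have "\<dots> = 4 + 4 / u + 1 / u\<^sup>2"
      using that by (simp add: field_simps power2_eq_square)
    finally show ?thesis .
  qed
  \<comment> \<open>the left side of the fixpoint equation increases, the right side decreases\<close>
  have False if "0 < u" "u < v" "u ^ 3 = (2 * u + 1)\<^sup>2" "v ^ 3 = (2 * v + 1)\<^sup>2" for u v :: real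
  proof -
    have "4 / v < 4 / u" "1 / v\<^sup>2 < 1 / u\<^sup>2"
      using that by (auto simp: frac_less2 power_strict_mono)
    then show False using that fixpoint[of u] fixpoint[of v] by linarith
  qed
  then show ?thesis using assms by (metis linorder_neqE_linordered_idom)
qed

lemma r_max_pos: "r_max > 0"
  and r_max_equation: "r_max ^ 3 = (2 * r_max + 1)\<^sup>2"
proof -
  obtain x :: real where x: "x > 0" "x ^ 3 = (2 * x + 1)\<^sup>2"
    using r_max_equation_solvable by blast
  have "r_max = x"
    unfolding r_max_def using x r_max_equation_unique by blast
  then show "r_max > 0" "r_max ^ 3 = (2 * r_max + 1)\<^sup>2" using x by auto
qed

lemma sqrt_r_max_equation: "sqrt r_max ^ 3 = 2 * sqrt r_max ^ 2 + 1"
proof -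
  have sq: "sqrt r_max ^ 2 = r_max" using r_max_pos by simp
  have "(sqrt r_max ^ 3)\<^sup>2 = (sqrt r_max ^ 2) ^ 3" by (simp flip: power_mult)
  also have "\<dots> = (2 * sqrt r_max ^ 2 + 1)\<^sup>2" using r_max_equation by (simp only: sq)
  finally have "(sqrt r_max ^ 3)\<^sup>2 = (2 * sqrt r_max ^ 2 + 1)\<^sup>2" .
  then show ?thesis by (rule power_eq_imp_eq_base) (use r_max_pos in auto)
qed

lemma cubic_root_ge_2:
  fixes R :: real
  assumes "R > 0" "R ^ 3 = 2 * R\<^sup>2 + 1"
  shows "R \<ge> 2"
proof (rule ccontr)
  assume "\<not> R \<ge> 2"
  then have "R * R\<^sup>2 < 2 * R\<^sup>2" using assms(1) by (intro mult_strict_right_mono) auto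
  then show False using assms(2) by (simp add: power3_eq_cube power2_eq_square)
qed

lemma c_r_eq: "c_r = sqrt r_max ^ 5"
proof -
  have "c_r = (r_max powr (1/2)) powr 5" by (simp add: c_r_def powr_powr)
  also have "\<dots> = sqrt r_max ^ 5" using r_max_pos by (simp add: powr_half_sqrt powr_realpow)
  finally show ?thesis .
qed

lemma r_max_le_c_r: "r_max \<le> c_r"
proof -
  have "sqrt r_max \<ge> 2"
    using r_max_pos sqrt_r_max_equation by (intro cubic_root_ge_2) auto
  then have "sqrt r_max ^ 2 \<le> sqrt r_max ^ 5" by (intro power_increasing) linarith+
  moreover have "sqrt r_max ^ 2 = r_max" using r_max_pos by simp
  ultimately show ?thesis by (simp add: c_r_eq)
qed

lemma cube_div_le_gap:
  fixes s R :: real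
  assumes "0 \<le> s" "s \<le> R" "R > 0" "R ^ 3 = 2 * R\<^sup>2 + 1"
  shows "s ^ 3 / (1 + 2 * s\<^sup>2) \<le> 1 - (R\<^sup>2 - s\<^sup>2) / R ^ 5"
proof -
  have R2: "R \<ge> 2" using assms(3,4) by (rule cubic_root_ge_2)
  have factor: "1 + 2 * s\<^sup>2 - s ^ 3 = (R - s) * (s\<^sup>2 + (R - 2) * s + R * (R - 2))"
    using assms(4) by (simp add: algebra_simps power2_eq_square power3_eq_cube)
  have "R ^ 5 * (R - 2) = R ^ 3 * (R ^ 3 - 2 * R\<^sup>2)"
    and "R ^ 5 * (R * (R - 2)) = R ^ 4 * (R ^ 3 - 2 * R\<^sup>2)"
    by algebra+
  then have R5: "R ^ 5 * (R - 2) = R ^ 3" "R ^ 5 * (R * (R - 2)) = R ^ 4"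
    using assms(4) by simp_all
  have "R ^ 4 \<ge> 2 ^ 4" using R2 by (intro power_mono) auto
  then have "4 * R * s\<^sup>2 \<le> R ^ 5 * s\<^sup>2"
    using R2 by (simp add: power_numeral_reduce mult_right_mono)
  moreover have "2 * s ^ 3 \<le> 2 * R * s\<^sup>2"
    using assms(1,2) by (simp add: power_numeral_reduce mult_right_mono mult_left_mono)
  moreover have "R \<le> R ^ 4" using R2 by (intro self_le_power) auto
  moreover have "s \<le> R ^ 3 * s"
    using mult_right_mono[of 1 "R ^ 3" s] one_le_power[of R 3] R2 assms(1) by simp
  ultimately have "(R + s) * (1 + 2 * s\<^sup>2)
      \<le> R ^ 5 * s\<^sup>2 + R ^ 5 * (R - 2) * s + R ^ 5 * (R * (R - 2))"
    unfolding R5 by (simp add: algebra_simps power_numeral_reduce)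
  also have "\<dots> = R ^ 5 * (s\<^sup>2 + (R - 2) * s + R * (R - 2))" by (simp add: algebra_simps)
  finally have "(R - s) * ((R + s) * (1 + 2 * s\<^sup>2))
      \<le> (R - s) * (R ^ 5 * (s\<^sup>2 + (R - 2) * s + R * (R - 2)))"
    using assms(2) by (intro mult_left_mono) auto
  then have "(R\<^sup>2 - s\<^sup>2) * (1 + 2 * s\<^sup>2) \<le> R ^ 5 * (1 + 2 * s\<^sup>2 - s ^ 3)"
    unfolding factor by (simp add: algebra_simps power2_eq_square)
  moreover have "R ^ 5 > 0" "1 + 2 * s\<^sup>2 > 0" using assms(3) by (auto intro: add_pos_nonneg)
  ultimately show ?thesis by (simp add: field_simps)
qed

lemma ratio_growth_le:
  fixes r \<delta> :: real
  assumes "0 < r" "r \<le> r_max - \<delta>" "0 \<le> \<delta>"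
  shows "r * sqrt r / (1 + 2 * r) \<le> 1 - \<delta> / c_r"
proof -
  define R where "R = sqrt r_max"
  define s where "s = sqrt r"
  have s2: "s\<^sup>2 = r" and R2: "R\<^sup>2 = r_max" using assms r_max_pos by (simp_all add: s_def R_def)
  have "s \<le> R" unfolding s_def R_def using assms by (intro real_sqrt_le_mono) auto
  then have "s ^ 3 / (1 + 2 * s\<^sup>2) \<le> 1 - (R\<^sup>2 - s\<^sup>2) / R ^ 5"
    using assms r_max_pos sqrt_r_max_equation
    by (intro cube_div_le_gap) (auto simp: R_def s_def)
  moreover have "r * sqrt r = s ^ 3" using s2 by (simp add: s_def power3_eq_cube power2_eq_square)
  moreover have "\<delta> / c_r \<le> (R\<^sup>2 - s\<^sup>2) / R ^ 5"
    unfolding c_r_eq R_def[symmetric] R2 s2 using assms r_max_pos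
    by (intro divide_right_mono) (auto simp: R_def)
  ultimately show ?thesis using s2 by simp
qed

lemma tau_bdf2_first: "tau t 1 \<noteq> 0 \<Longrightarrow> tau t 1 * bdf2 t 1 0 = 1"
  by (simp add: bdf2_def)

lemma tau_bdf2_diag:
  "2 \<le> k \<Longrightarrow> tau t k \<noteq> 0 \<Longrightarrow>
    tau t k * bdf2 t k 0 = (1 + 2 * ratio t k) / (1 + ratio t k)"
  by (simp add: bdf2_def)

lemma tau_bdf2_subdiag:
  assumes "1 \<le> k" "tau t k \<noteq> 0"
  shows "tau t k * bdf2 t (Suc k) 1 = - ratio t (Suc k) / (1 + ratio t (Suc k))"
proof -
  have "tau t (Suc k) = ratio t (Suc k) * tau t k" using assms(2) by (simp add: ratio_def)
  then show ?thesis using assms by (simp add: bdf2_def power2_eq_square)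
qed

lemma dcc_diag:
  assumes "is_dcc t N p" "1 \<le> n" "n \<le> N"
  shows "p n 0 * bdf2 t n 0 = 1"
  using assms unfolding is_dcc_def by force

lemma dcc_two_term:
  assumes "is_dcc t N p" "n \<le> N" "1 \<le> k" "k < n"
  shows "p n (n - k) * bdf2 t k 0 + p n (n - Suc k) * bdf2 t (Suc k) 1 = 1"
proof -
  have "(\<Sum>j = k..n. p n (n - j) * bdf2 t j (j - k)) = 1"
    using assms unfolding is_dcc_def by auto
  moreover have "(\<Sum>j = Suc (Suc k)..n. p n (n - j) * bdf2 t j (j - k)) = 0"
    by (rule sum.neutral) (auto simp: bdf2_def)
  ultimately show ?thesis using assms by (simp add: sum.atLeast_Suc_atMost)
qed

lemma dcc_recursion:
  assumes "is_dcc t N p" "n \<le> N" "1 \<le> k" "k < n" "tau t k \<noteq> 0"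
  shows "tau t k * bdf2 t k 0 * p n (n - k)
    = tau t k + ratio t (Suc k) / (1 + ratio t (Suc k)) * p n (n - Suc k)"
proof -
  have "tau t k * (p n (n - k) * bdf2 t k 0 + p n (n - Suc k) * bdf2 t (Suc k) 1) = tau t k"
    using dcc_two_term[OF assms(1-4)] by simp
  then have "tau t k * bdf2 t k 0 * p n (n - k)
      = tau t k - (tau t k * bdf2 t (Suc k) 1) * p n (n - Suc k)"
    by (simp add: algebra_simps)
  then show ?thesis unfolding tau_bdf2_subdiag[OF assms(3,5)] by simp
qed

lemma dcc_step_le:
  assumes "is_dcc t N p" "n \<le> N" "1 \<le> k" "k < n"
    and "0 < tau t k" "0 < tau t (Suc k)"
    and "tau t (Suc k) * bdf2 t (Suc k) 0 * p n (n - Suc k) \<le> sqrt (tau t (Suc k)) * X"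
  shows "tau t k * bdf2 t k 0 * p n (n - k)
    \<le> tau t k + ratio t (Suc k) / (1 + 2 * ratio t (Suc k)) * sqrt (tau t (Suc k)) * X"
proof -
  define r where "r = ratio t (Suc k)"
  have "r > 0" using assms(5,6) by (simp add: r_def ratio_def)
  have weight: "tau t (Suc k) * bdf2 t (Suc k) 0 = (1 + 2 * r) / (1 + r)"
    using assms(3,6) by (simp add: tau_bdf2_diag r_def)
  have "r / (1 + r) * p n (n - Suc k)
      = r / (1 + 2 * r) * ((1 + 2 * r) / (1 + r) * p n (n - Suc k))"
    using \<open>r > 0\<close> by (simp add: add_pos_pos)
  also have "\<dots> = r / (1 + 2 * r) * (tau t (Suc k) * bdf2 t (Suc k) 0 * p n (n - Suc k))"
    by (simp only: weight)
  also have "\<dots> \<le> r / (1 + 2 * r) * (sqrt (tau t (Suc k)) * X)"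
    using \<open>r > 0\<close> assms(7) by (intro mult_left_mono) auto
  finally show ?thesis
    using dcc_recursion[OF assms(1-4)] assms(5) by (simp add: r_def mult.assoc)
qed

context
  fixes t :: "nat \<Rightarrow> real" and N :: nat and p :: "nat \<Rightarrow> nat \<Rightarrow> real" and S B :: real
  assumes dcc: "is_dcc t N p"
    and N_pos: "1 \<le> N"
    and tau_pos: "\<And>k. 1 \<le> k \<Longrightarrow> k \<le> N \<Longrightarrow> 0 < tau t k"
    and sqrt_tau_le: "\<And>k. 1 \<le> k \<Longrightarrow> k \<le> N \<Longrightarrow> sqrt (tau t k) \<le> S"
    and B_ge_1: "1 \<le> B"
    and growth: "\<And>k. 3 \<le> k \<Longrightarrow> k \<le> N \<Longrightarrow>
      ratio t k * sqrt (ratio t k) / (1 + 2 * ratio t k) \<le> 1 - 1 / B"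
begin

lemma sqrt_tau_bound_nonneg: "0 \<le> S"
  using order_trans[OF real_sqrt_ge_zero sqrt_tau_le[of 1]] tau_pos[of 1] N_pos by simp

lemma tau_le_sqrt_tau_mult:
  assumes "1 \<le> k" "k \<le> N"
  shows "tau t k \<le> sqrt (tau t k) * S"
proof -
  have "tau t k = sqrt (tau t k) * sqrt (tau t k)" using tau_pos[OF assms] by simp
  also have "\<dots> \<le> sqrt (tau t k) * S"
    using sqrt_tau_le[OF assms] tau_pos[OF assms] by (intro mult_left_mono) auto
  finally show ?thesis .
qed

lemma dcc_weighted_bound:
  assumes "n \<le> N" "2 \<le> j" "j \<le> n"
  shows "tau t j * bdf2 t j 0 * p n (n - j) \<le> sqrt (tau t j) * S * B"
  using \<open>j \<le> n\<close> \<open>2 \<le> j\<close>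
proof (induction j rule: inc_induct)
  case base
  have "tau t n * bdf2 t n 0 * p n (n - n) = tau t n * (p n 0 * bdf2 t n 0)"
    by (simp add: mult_ac)
  also have "\<dots> = tau t n" using dcc_diag[OF dcc, of n] base \<open>n \<le> N\<close> by simp
  also have "\<dots> \<le> sqrt (tau t n) * S * 1"
    using tau_le_sqrt_tau_mult base \<open>n \<le> N\<close> by simp
  also have "\<dots> \<le> sqrt (tau t n) * S * B"
    using B_ge_1 sqrt_tau_bound_nonneg tau_pos[of n] base \<open>n \<le> N\<close>
    by (intro mult_left_mono) auto
  finally show ?case .
next
  case (step k)
  define r where "r = ratio t (Suc k)"
  have k: "1 \<le> k" "Suc k \<le> N" using step \<open>n \<le> N\<close> by auto
  have "r > 0" using tau_pos[of k] tau_pos[of "Suc k"] k by (simp add: r_def ratio_def)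
  have "sqrt (tau t (Suc k)) = sqrt r * sqrt (tau t k)"
    using tau_pos[of k] k by (simp add: r_def ratio_def flip: real_sqrt_mult)
  then have "tau t k * bdf2 t k 0 * p n (n - k)
      \<le> tau t k + (r * sqrt r / (1 + 2 * r)) * B * (sqrt (tau t k) * S)"
    using dcc_step_le[OF dcc \<open>n \<le> N\<close> k(1) step(2), of "S * B"] step tau_pos k
    by (simp add: r_def mult_ac)
  also have "\<dots> \<le> sqrt (tau t k) * S + (1 - 1 / B) * B * (sqrt (tau t k) * S)"
    using growth[of "Suc k"] step k tau_le_sqrt_tau_mult sqrt_tau_bound_nonneg tau_pos[of k] B_ge_1
    by (intro add_mono mult_right_mono) (auto simp: r_def)
  also have "\<dots> = sqrt (tau t k) * S * B" using B_ge_1 by (simp add: algebra_simps)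
  finally show ?case .
qed

lemma dcc_kernel_le:
  assumes "n \<le> N" "2 \<le> j" "j \<le> n"
  shows "p n (n - j) \<le> sqrt (tau t j) * S * B"
proof (cases "p n (n - j) \<le> 0")
  case True
  have "0 \<le> sqrt (tau t j) * S * B"
    using tau_pos[of j] sqrt_tau_bound_nonneg B_ge_1 assms by (intro mult_nonneg_nonneg) auto
  with True show ?thesis by linarith
next
  case False
  have "0 < tau t (j - 1)" "0 < tau t j" using tau_pos assms by auto
  then have "0 < ratio t j" by (simp add: ratio_def)
  then have "1 \<le> tau t j * bdf2 t j 0"
    using tau_pos[of j] assms by (simp add: tau_bdf2_diag)
  then have "p n (n - j) \<le> tau t j * bdf2 t j 0 * p n (n - j)"
    using mult_right_mono[of 1 _ "p n (n - j)"] False by simp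
  then show ?thesis using dcc_weighted_bound[OF assms] by simp
qed

lemma dcc_first_kernel_le:
  assumes "1 \<le> n" "n \<le> N" "2 \<le> N"
  shows "p n (n - 1) \<le> tau t 1 + sqrt (tau t 2) * S * B"
proof -
  have first_weight: "tau t 1 * bdf2 t 1 0 = 1"
    using tau_bdf2_first tau_pos[of 1] N_pos by simp
  have tail_nonneg: "0 \<le> sqrt (tau t 2) * S * B"
    using tau_pos[of 2] sqrt_tau_bound_nonneg B_ge_1 \<open>2 \<le> N\<close> by (intro mult_nonneg_nonneg) auto
  show ?thesis
  proof (cases "n = 1")
    case True
    have "p 1 0 = tau t 1 * (p 1 0 * bdf2 t 1 0)"
      using first_weight by (simp add: mult_ac)
    also have "\<dots> = tau t 1" using dcc_diag[OF dcc] N_pos by simp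
    finally show ?thesis using True tail_nonneg by simp
  next
    case False
    define r where "r = ratio t 2"
    have "2 \<le> n" using False \<open>1 \<le> n\<close> by simp
    have "r > 0" using tau_pos[of 1] tau_pos[of 2] \<open>2 \<le> N\<close> by (simp add: r_def ratio_def)
    have "p n (n - 1) = tau t 1 * bdf2 t 1 0 * p n (n - 1)" using first_weight by simp
    also have "\<dots> \<le> tau t 1 + r / (1 + 2 * r) * (sqrt (tau t 2) * S * B)"
      using dcc_step_le[OF dcc \<open>n \<le> N\<close>, of 1 "S * B"] dcc_weighted_bound[of n 2]
        \<open>2 \<le> n\<close> \<open>n \<le> N\<close> tau_pos[of 1] tau_pos[of 2] \<open>2 \<le> N\<close>
      by (simp add: r_def numeral_2_eq_2 mult.assoc)
    also have "\<dots> \<le> tau t 1 + 1 * (sqrt (tau t 2) * S * B)"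
      using \<open>r > 0\<close> tail_nonneg by (intro add_left_mono mult_right_mono) auto
    finally show ?thesis by simp
  qed
qed

end

theorem mainTheorem6:
  fixes t :: "nat \<Rightarrow> real" and N :: nat and T \<delta> :: real
    and p :: "nat \<Rightarrow> nat \<Rightarrow> real"
  assumes "N \<ge> 1"
    and "t 0 = 0" and "t N = T"
    and "\<And>k. 1 \<le> k \<Longrightarrow> k \<le> N \<Longrightarrow> t (k - 1) < t k"
    and "0 < \<delta>" and "\<delta> < r_max"
    and "2 \<le> N \<Longrightarrow> ratio t 2 > 0"
    and "\<And>k. 3 \<le> k \<Longrightarrow> k \<le> N \<Longrightarrow> 0 < ratio t k \<and> ratio t k \<le> r_max - \<delta>"
    and "is_dcc t N p"
  shows "\<forall>n\<in>{1..N}.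
           (\<forall>j\<in>{2..n}. p n (n - j) \<le> c_r / \<delta> * sqrt (tau t j) * sqrt (tau_max t N))
         \<and> (2 \<le> N \<longrightarrow> p n (n - 1) \<le> tau t 1 + c_r / \<delta> * sqrt (tau t 2) * sqrt (tau_max t N))"
proof -
  define S where "S = sqrt (tau_max t N)"
  define B where "B = c_r / \<delta>"
  have tau_pos: "0 < tau t k" if "1 \<le> k" "k \<le> N" for k
    using assms(4)[OF that] by (simp add: tau_def)
  have sqrt_tau_le: "sqrt (tau t k) \<le> S" if "1 \<le> k" "k \<le> N" for k
    unfolding S_def tau_max_def using that by (intro real_sqrt_le_mono Max_ge) auto
  have "1 \<le> B" using r_max_le_c_r assms(5,6) by (simp add: B_def)
  have growth: "ratio t k * sqrt (ratio t k) / (1 + 2 * ratio t k) \<le> 1 - 1 / B"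
    if "3 \<le> k" "k \<le> N" for k
    using ratio_growth_le assms(5) assms(8)[OF that] by (simp add: B_def less_imp_le)
  note kernel_bounds = dcc_kernel_le[OF assms(9,1) tau_pos sqrt_tau_le \<open>1 \<le> B\<close> growth]
    dcc_first_kernel_le[OF assms(9,1) tau_pos sqrt_tau_le \<open>1 \<le> B\<close> growth]
  show ?thesis using kernel_bounds by (auto simp: S_def B_def mult_ac)
qed

end
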